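(* Let $f\in\mathcal{F}_3$ and $\mathbf{x}\in[0,1]^3$. (a) There exists an optimal solution $\theta$ of the linear program defining $f^{+}(\mathbf{x})$ with $\theta(\{1,2,3\})\le x_1x_2x_3$. (b) If moreover $x_1+x_2+x_3\le1$ or $x_1+x_2+x_3\ge2$, there exists an optimal solution $\theta$ of that linear program which is negatively cylinder dependent, i.e. $\sum_{S\supseteq T}\theta(S)\le\prod_{i\in T}x_i$ for every nonempty $T\subseteq[3]$.
   Context: $[n]=\{1,\dots,n\}$. A set function $f:2^{[n]}\to\mathbb{R}_+$ is monotone if $f(S)\le f(T)$ for $S\subseteq T$, submodular if $f(S)+f(T)\ge f(S\cap T)+f(S\cup T)$. $\mathcal{F}_n$ is the set of monotone submodular $f:2^{[n]}\to\mathbb{R}_+$ with $f(\emptyset)=0$, $f([n])=1$. For $\mathbf{x}\in[0,1]^n$, the concave closure $f^{+}(\mathbf{x})$ is the optimal value of the linear program: maximize $\sum_{S\subseteq[n]}\theta(S)f(S)$ over $\theta:2^{[n]}\to\mathbb{R}_{\ge0}$ with $\sum_S\theta(S)=1$ and $\sum_{S\ni i}\theta(S)=x_i$ for all $i\in[n]$. *)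

theory Defs
  imports "HOL-Analysis.Analysis"
begin

text \<open>Ground set [n] = {1..n}; set functions are maps nat set \<Rightarrow> real,
  only their values on subsets of {1..n} matter.\<close>

definition monotone_sf :: "nat \<Rightarrow> (nat set \<Rightarrow> real) \<Rightarrow> bool" where
  "monotone_sf n f \<longleftrightarrow> (\<forall>S T. S \<subseteq> T \<and> T \<subseteq> {1..n} \<longrightarrow> f S \<le> f T)"

definition submodular_sf :: "nat \<Rightarrow> (nat set \<Rightarrow> real) \<Rightarrow> bool" where
  "submodular_sf n f \<longleftrightarrow> (\<forall>S T. S \<subseteq> {1..n} \<and> T \<subseteq> {1..n} \<longrightarrow>
      f S + f T \<ge> f (S \<inter> T) + f (S \<union> T))"

definition class_F :: "nat \<Rightarrow> (nat set \<Rightarrow> real) \<Rightarrow> bool" where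
  "class_F n f \<longleftrightarrow> (\<forall>S. S \<subseteq> {1..n} \<longrightarrow> f S \<ge> 0) \<and> monotone_sf n f \<and> submodular_sf n f
      \<and> f {} = 0 \<and> f {1..n} = 1"

text \<open>Feasible solutions of the LP defining the concave closure f^+(x).\<close>
definition lp_feasible :: "nat \<Rightarrow> (nat \<Rightarrow> real) \<Rightarrow> (nat set \<Rightarrow> real) \<Rightarrow> bool" where
  "lp_feasible n x \<theta> \<longleftrightarrow> (\<forall>S. S \<subseteq> {1..n} \<longrightarrow> \<theta> S \<ge> 0)
      \<and> (\<Sum>S\<in>Pow {1..n}. \<theta> S) = 1
      \<and> (\<forall>i\<in>{1..n}. (\<Sum>S\<in>{S\<in>Pow {1..n}. i \<in> S}. \<theta> S) = x i)"

definition lp_objective :: "nat \<Rightarrow> (nat set \<Rightarrow> real) \<Rightarrow> (nat set \<Rightarrow> real) \<Rightarrow> real" where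
  "lp_objective n f \<theta> = (\<Sum>S\<in>Pow {1..n}. \<theta> S * f S)"

definition lp_optimal :: "nat \<Rightarrow> (nat set \<Rightarrow> real) \<Rightarrow> (nat \<Rightarrow> real) \<Rightarrow> (nat set \<Rightarrow> real) \<Rightarrow> bool" where
  "lp_optimal n f x \<theta> \<longleftrightarrow> lp_feasible n x \<theta>
      \<and> (\<forall>\<theta>'. lp_feasible n x \<theta>' \<longrightarrow> lp_objective n f \<theta>' \<le> lp_objective n f \<theta>)"

definition neg_cylinder_dep :: "nat \<Rightarrow> (nat \<Rightarrow> real) \<Rightarrow> (nat set \<Rightarrow> real) \<Rightarrow> bool" where
  "neg_cylinder_dep n x \<theta> \<longleftrightarrow> (\<forall>T. T \<subseteq> {1..n} \<and> T \<noteq> {} \<longrightarrow>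
      (\<Sum>S\<in>{S\<in>Pow {1..n}. T \<subseteq> S}. \<theta> S) \<le> (\<Prod>i\<in>T. x i))"

end

theory Submission imports Defs begin

text \<open>
  If \<open>x\<^sub>1 + x\<^sub>2 + x\<^sub>3 \<le> 1\<close>, subadditivity shows that the distribution on the empty set and the
  singletons is optimal; if \<open>x\<^sub>1 + x\<^sub>2 + x\<^sub>3 \<ge> 2\<close>, the inequalities
  \<open>f{i} + f[3] \<le> f{i,j} + f{i,k}\<close> show dually that the distribution on the pairs and \<open>[3]\<close> is
  optimal. Both solutions are negatively cylinder dependent. In the remaining range the mass of
  \<open>[3]\<close> can always be moved onto the pairs without decreasing the objective: mass on
  \<open>[3]\<close> and \<open>{i}\<close> is traded for mass on \<open>{i,j}\<close> and \<open>{i,k}\<close>, mass on \<open>\<emptyset>\<close> and twice as much on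
  \<open>[3]\<close> for mass on all three pairs, and by submodularity neither trade loses value.
  Maximising over the compact polytope of solutions without mass on \<open>[3]\<close> then gives an optimal solution with \<open>\<theta>([3]) = 0\<close>.
\<close>

definition set_fun3 ::
    "real \<Rightarrow> real \<Rightarrow> real \<Rightarrow> real \<Rightarrow> real \<Rightarrow> real \<Rightarrow> real \<Rightarrow> real \<Rightarrow> nat set \<Rightarrow> real" where
  "set_fun3 a0 a1 a2 a3 a12 a13 a23 a123 S =
    (if 1 \<in> S then (if 2 \<in> S then (if 3 \<in> S then a123 else a12) else (if 3 \<in> S then a13 else a1))
     else (if 2 \<in> S then (if 3 \<in> S then a23 else a2) else (if 3 \<in> S then a3 else a0)))"

lemma set_fun3_simps:
  "set_fun3 a0 a1 a2 a3 a12 a13 a23 a123 {} = a0"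
  "set_fun3 a0 a1 a2 a3 a12 a13 a23 a123 {1} = a1"
  "set_fun3 a0 a1 a2 a3 a12 a13 a23 a123 {2} = a2"
  "set_fun3 a0 a1 a2 a3 a12 a13 a23 a123 {3} = a3"
  "set_fun3 a0 a1 a2 a3 a12 a13 a23 a123 {1,2} = a12"
  "set_fun3 a0 a1 a2 a3 a12 a13 a23 a123 {1,3} = a13"
  "set_fun3 a0 a1 a2 a3 a12 a13 a23 a123 {2,3} = a23"
  "set_fun3 a0 a1 a2 a3 a12 a13 a23 a123 {1,2,3} = a123"
  by (simp_all add: set_fun3_def)

lemma Pow_atLeastAtMost_3: "Pow {1..3::nat} = {{},{1},{2},{3},{1,2},{1,3},{2,3},{1,2,3}}"
proof -
  have "{1..3::nat} = {1,2,3}" by auto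
  then show ?thesis by (simp add: Pow_insert insert_commute image_insert)
qed

lemma sum_Pow_atLeastAtMost_3:
  "(\<Sum>S\<in>Pow {1..3::nat}. g S) =
    g {} + g {1} + g {2} + g {3} + g {1,2} + g {1,3} + g {2,3} + g {1,2,3}"
proof -
  have "{2,3} \<noteq> {1,2,3::nat}" by (rule notI, drule arg_cong[where f="\<lambda>A. 1 \<in> A"], simp)
  then have "{1,2} \<notin> {{1,3},{2,3},{1,2,3::nat}}" "{1,3} \<notin> {{2,3},{1,2,3::nat}}"
    "{2,3} \<notin> {{1,2,3::nat}}" "{3} \<notin> {{1,2},{1,3},{2,3},{1,2,3::nat}}"
    "{2} \<notin> {{3},{1,2},{1,3},{2,3},{1,2,3::nat}}"
    "{1} \<notin> {{2},{3},{1,2},{1,3},{2,3},{1,2,3::nat}}"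
    "{} \<notin> {{1},{2},{3},{1,2},{1,3},{2,3},{1,2,3::nat}}"
    by auto
  then show ?thesis unfolding Pow_atLeastAtMost_3 by (simp add: add.assoc del: insert_iff)
qed

lemma sum_filter_Pow_atLeastAtMost_3:
  "(\<Sum>S\<in>{S\<in>Pow {1..3::nat}. P S}. g S) = (\<Sum>S\<in>Pow {1..3::nat}. if P S then g S else 0)"
  by (rule sum.inter_filter) simp

lemma lp_feasible_3_iff:
  "lp_feasible 3 x \<theta> \<longleftrightarrow>
     \<theta> {} \<ge> 0 \<and> \<theta> {1} \<ge> 0 \<and> \<theta> {2} \<ge> 0 \<and> \<theta> {3} \<ge> 0 \<and>
     \<theta> {1,2} \<ge> 0 \<and> \<theta> {1,3} \<ge> 0 \<and> \<theta> {2,3} \<ge> 0 \<and> \<theta> {1,2,3} \<ge> 0 \<and>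
     \<theta> {} + \<theta> {1} + \<theta> {2} + \<theta> {3} + \<theta> {1,2} + \<theta> {1,3} + \<theta> {2,3} + \<theta> {1,2,3} = 1 \<and>
     \<theta> {1} + \<theta> {1,2} + \<theta> {1,3} + \<theta> {1,2,3} = x 1 \<and>
     \<theta> {2} + \<theta> {1,2} + \<theta> {2,3} + \<theta> {1,2,3} = x 2 \<and>
     \<theta> {3} + \<theta> {1,3} + \<theta> {2,3} + \<theta> {1,2,3} = x 3"
proof -
  have ball_Pow: "(\<forall>S. S \<subseteq> {1..3::nat} \<longrightarrow> P S) \<longleftrightarrow> (\<forall>S\<in>Pow {1..3}. P S)" for P by auto
  have ball_3: "(\<forall>i\<in>{1..3::nat}. Q i) \<longleftrightarrow> Q 1 \<and> Q 2 \<and> Q 3" for Q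
    by (auto simp: numeral_eq_Suc le_Suc_eq)
  show ?thesis
    unfolding lp_feasible_def ball_Pow ball_3
    unfolding sum_filter_Pow_atLeastAtMost_3 sum_Pow_atLeastAtMost_3
    unfolding Pow_atLeastAtMost_3
    by (simp add: ac_simps)
qed

lemma lp_feasible_3D:
  assumes "lp_feasible 3 x \<theta>"
  shows "\<theta> {} \<ge> 0" "\<theta> {1} \<ge> 0" "\<theta> {2} \<ge> 0" "\<theta> {3} \<ge> 0"
    "\<theta> {1,2} \<ge> 0" "\<theta> {1,3} \<ge> 0" "\<theta> {2,3} \<ge> 0" "\<theta> {1,2,3} \<ge> 0"
    "x 1 = \<theta> {1} + \<theta> {1,2} + \<theta> {1,3} + \<theta> {1,2,3}"
    "x 2 = \<theta> {2} + \<theta> {1,2} + \<theta> {2,3} + \<theta> {1,2,3}"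
    "x 3 = \<theta> {3} + \<theta> {1,3} + \<theta> {2,3} + \<theta> {1,2,3}"
    "\<theta> {} = 1 - (\<theta> {1} + \<theta> {2} + \<theta> {3} + \<theta> {1,2} + \<theta> {1,3} + \<theta> {2,3} + \<theta> {1,2,3})"
  using assms unfolding lp_feasible_3_iff by linarith+

lemma lp_objective_3:
  "lp_objective 3 f \<theta> =
    \<theta> {} * f {} + \<theta> {1} * f {1} + \<theta> {2} * f {2} + \<theta> {3} * f {3} +
    \<theta> {1,2} * f {1,2} + \<theta> {1,3} * f {1,3} + \<theta> {2,3} * f {2,3} + \<theta> {1,2,3} * f {1,2,3}"
  unfolding lp_objective_def sum_Pow_atLeastAtMost_3 by simp

lemma neg_cylinder_dep_3_iff:
  "neg_cylinder_dep 3 x \<theta> \<longleftrightarrow>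
     \<theta> {1} + \<theta> {1,2} + \<theta> {1,3} + \<theta> {1,2,3} \<le> x 1 \<and>
     \<theta> {2} + \<theta> {1,2} + \<theta> {2,3} + \<theta> {1,2,3} \<le> x 2 \<and>
     \<theta> {3} + \<theta> {1,3} + \<theta> {2,3} + \<theta> {1,2,3} \<le> x 3 \<and>
     \<theta> {1,2} + \<theta> {1,2,3} \<le> x 1 * x 2 \<and>
     \<theta> {1,3} + \<theta> {1,2,3} \<le> x 1 * x 3 \<and>
     \<theta> {2,3} + \<theta> {1,2,3} \<le> x 2 * x 3 \<and>
     \<theta> {1,2,3} \<le> x 1 * x 2 * x 3"
proof -
  have ball_nonempty:
    "(\<forall>T. T \<subseteq> {1..3::nat} \<and> T \<noteq> {} \<longrightarrow> P T) \<longleftrightarrow> (\<forall>T\<in>Pow {1..3} - {{}}. P T)" for P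
    by auto
  show ?thesis
    unfolding neg_cylinder_dep_def ball_nonempty
    unfolding sum_filter_Pow_atLeastAtMost_3 sum_Pow_atLeastAtMost_3
    unfolding Pow_atLeastAtMost_3
    by (simp add: ac_simps)
qed

lemma class_F_3_inequalities:
  assumes "class_F 3 f"
  shows "f {} = 0" "f {1,2,3} = 1"
    "f {1,2} \<le> f {1} + f {2}" "f {1,3} \<le> f {1} + f {3}" "f {2,3} \<le> f {2} + f {3}"
    "f {1,2,3} \<le> f {1} + f {2,3}"
    "f {1} + f {1,2,3} \<le> f {1,2} + f {1,3}"
    "f {2} + f {1,2,3} \<le> f {1,2} + f {2,3}"
    "f {3} + f {1,2,3} \<le> f {1,3} + f {2,3}"
proof -
  have "{1..3::nat} = {1,2,3}" by auto
  then have f0: "f {} = 0" and f1: "f {1,2,3} = 1"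
    and sub: "\<And>S T. S \<subseteq> {1,2,3} \<Longrightarrow> T \<subseteq> {1,2,3} \<Longrightarrow> f (S \<inter> T) + f (S \<union> T) \<le> f S + f T"
    using assms unfolding class_F_def submodular_sf_def by auto
  show "f {} = 0" "f {1,2,3} = 1" using f0 f1 by simp_all
  show "f {1,2} \<le> f {1} + f {2}" using sub[of "{1}" "{2}"] f0 by (simp add: insert_commute)
  show "f {1,3} \<le> f {1} + f {3}" using sub[of "{1}" "{3}"] f0 by (simp add: insert_commute)
  show "f {2,3} \<le> f {2} + f {3}" using sub[of "{2}" "{3}"] f0 by (simp add: insert_commute)
  show "f {1,2,3} \<le> f {1} + f {2,3}" using sub[of "{1}" "{2,3}"] f0 by (simp add: insert_commute)
  have "{1,2} \<inter> {1,3} = {1::nat}" "{1,2} \<union> {1,3} = {1,2,3::nat}" by auto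
  then show "f {1} + f {1,2,3} \<le> f {1,2} + f {1,3}" using sub[of "{1,2}" "{1,3}"] by simp
  have "{1,2} \<inter> {2,3} = {2::nat}" "{1,2} \<union> {2,3} = {1,2,3::nat}" by auto
  then show "f {2} + f {1,2,3} \<le> f {1,2} + f {2,3}" using sub[of "{1,2}" "{2,3}"] by simp
  have "{1,3} \<inter> {2,3} = {3::nat}" "{1,3} \<union> {2,3} = {1,2,3::nat}" by auto
  then show "f {3} + f {1,2,3} \<le> f {1,3} + f {2,3}" using sub[of "{1,3}" "{2,3}"] by simp
qed

lemma add_le_mult_plus_one:
  fixes a b :: real
  assumes "a \<le> 1" "b \<le> 1"
  shows "a + b - 1 \<le> a * b"
proof -
  have "0 \<le> (1 - a) * (1 - b)" using assms by simp
  then show ?thesis by (simp add: algebra_simps)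
qed

lemma add3_le_mult3_plus_two:
  fixes a b c :: real
  assumes "a \<le> 1" "b \<le> 1" "0 \<le> c" "c \<le> 1"
  shows "a + b + c - 2 \<le> a * b * c"
proof -
  have "0 \<le> (1 - a) * (1 - b) * c + (1 - a) * (1 - c) + (1 - b) * (1 - c)"
    using assms by (intro add_nonneg_nonneg mult_nonneg_nonneg) auto
  then show ?thesis by (simp add: algebra_simps)
qed

lemma lp_optimal_singletons:
  assumes f: "class_F 3 f" and x: "\<forall>i\<in>{1..3}. 0 \<le> x i \<and> x i \<le> 1"
    and small: "x 1 + x 2 + x 3 \<le> 1"
  defines "\<theta> \<equiv> set_fun3 (1 - (x 1 + x 2 + x 3)) (x 1) (x 2) (x 3) 0 0 0 0"
  shows "lp_optimal 3 f x \<theta>" "neg_cylinder_dep 3 x \<theta>"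
proof -
  have x: "0 \<le> x 1" "0 \<le> x 2" "0 \<le> x 3" using x by auto
  note F = class_F_3_inequalities[OF f]
  have "lp_objective 3 f \<theta>' \<le> lp_objective 3 f \<theta>" if "lp_feasible 3 x \<theta>'" for \<theta>'
  proof -
    note \<theta>' = lp_feasible_3D[OF that]
    have "\<theta>' {1,2} * f {1,2} \<le> \<theta>' {1,2} * (f {1} + f {2})"
      "\<theta>' {1,3} * f {1,3} \<le> \<theta>' {1,3} * (f {1} + f {3})"
      "\<theta>' {2,3} * f {2,3} \<le> \<theta>' {2,3} * (f {2} + f {3})"
      "\<theta>' {1,2,3} * f {1,2,3} \<le> \<theta>' {1,2,3} * (f {1} + f {2} + f {3})"
      using \<theta>' F by (intro mult_left_mono; linarith)+
    moreover have "\<theta>' {1} * f {1} + \<theta>' {2} * f {2} + \<theta>' {3} * f {3} +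
        \<theta>' {1,2} * (f {1} + f {2}) + \<theta>' {1,3} * (f {1} + f {3}) + \<theta>' {2,3} * (f {2} + f {3}) +
        \<theta>' {1,2,3} * (f {1} + f {2} + f {3}) = x 1 * f {1} + x 2 * f {2} + x 3 * f {3}"
      unfolding \<theta>'(9-11) by (simp add: algebra_simps)
    ultimately show ?thesis unfolding lp_objective_3 \<theta>_def set_fun3_simps using F by simp
  qed
  moreover have "lp_feasible 3 x \<theta>" unfolding lp_feasible_3_iff \<theta>_def set_fun3_simps using x small by simp
  ultimately show "lp_optimal 3 f x \<theta>" unfolding lp_optimal_def by blast
  show "neg_cylinder_dep 3 x \<theta>" unfolding neg_cylinder_dep_3_iff \<theta>_def set_fun3_simps using x by simp
qed

lemma lp_optimal_pairs:
  assumes f: "class_F 3 f" and x: "\<forall>i\<in>{1..3}. 0 \<le> x i \<and> x i \<le> 1"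
    and large: "x 1 + x 2 + x 3 \<ge> 2"
  defines "\<theta> \<equiv> set_fun3 0 0 0 0 (1 - x 3) (1 - x 2) (1 - x 1) (x 1 + x 2 + x 3 - 2)"
  shows "lp_optimal 3 f x \<theta>" "neg_cylinder_dep 3 x \<theta>"
proof -
  have x: "0 \<le> x 1" "0 \<le> x 2" "0 \<le> x 3" "x 1 \<le> 1" "x 2 \<le> 1" "x 3 \<le> 1" using x by auto
  note F = class_F_3_inequalities[OF f]
  have "lp_objective 3 f \<theta>' \<le> lp_objective 3 f \<theta>" if "lp_feasible 3 x \<theta>'" for \<theta>'
  proof -
    note \<theta>' = lp_feasible_3D[OF that]
    have "\<theta>' {} * f {} \<le> \<theta>' {} * (f {1,2} + f {1,3} + f {2,3} - 2)"
      "\<theta>' {1} * f {1} \<le> \<theta>' {1} * (f {1,2} + f {1,3} - 1)"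
      "\<theta>' {2} * f {2} \<le> \<theta>' {2} * (f {1,2} + f {2,3} - 1)"
      "\<theta>' {3} * f {3} \<le> \<theta>' {3} * (f {1,3} + f {2,3} - 1)"
      using \<theta>' F by (intro mult_left_mono; linarith)+
    moreover have "\<theta>' {} * (f {1,2} + f {1,3} + f {2,3} - 2) + \<theta>' {1} * (f {1,2} + f {1,3} - 1) +
        \<theta>' {2} * (f {1,2} + f {2,3} - 1) + \<theta>' {3} * (f {1,3} + f {2,3} - 1) +
        \<theta>' {1,2} * f {1,2} + \<theta>' {1,3} * f {1,3} + \<theta>' {2,3} * f {2,3} + \<theta>' {1,2,3} =
        (1 - x 3) * f {1,2} + (1 - x 2) * f {1,3} + (1 - x 1) * f {2,3} + (x 1 + x 2 + x 3 - 2)"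
      unfolding \<theta>'(9-12) by (simp add: algebra_simps)
    ultimately show ?thesis unfolding lp_objective_3 \<theta>_def set_fun3_simps using F by simp
  qed
  moreover have "lp_feasible 3 x \<theta>" unfolding lp_feasible_3_iff \<theta>_def set_fun3_simps using x large by simp
  ultimately show "lp_optimal 3 f x \<theta>" unfolding lp_optimal_def by blast
  show "neg_cylinder_dep 3 x \<theta>" unfolding neg_cylinder_dep_3_iff \<theta>_def set_fun3_simps
    using x add_le_mult_plus_one[of "x 1" "x 2"] add_le_mult_plus_one[of "x 1" "x 3"]
      add_le_mult_plus_one[of "x 2" "x 3"] add3_le_mult3_plus_two[of "x 1" "x 2" "x 3"]
    by simp
qed

lemma lp_feasible_independent_3:
  assumes "\<forall>i\<in>{1..3}. 0 \<le> x i \<and> x i \<le> 1"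
  shows "lp_feasible 3 x (set_fun3
    ((1 - x 1) * (1 - x 2) * (1 - x 3)) (x 1 * (1 - x 2) * (1 - x 3))
    ((1 - x 1) * x 2 * (1 - x 3)) ((1 - x 1) * (1 - x 2) * x 3)
    (x 1 * x 2 * (1 - x 3)) (x 1 * (1 - x 2) * x 3) ((1 - x 1) * x 2 * x 3) (x 1 * x 2 * x 3))"
proof -
  have x: "0 \<le> x 1" "0 \<le> x 2" "0 \<le> x 3" "x 1 \<le> 1" "x 2 \<le> 1" "x 3 \<le> 1" using assms by auto
  show ?thesis unfolding lp_feasible_3_iff set_fun3_simps
    apply (intro conjI)
    apply (use x in \<open>(intro mult_nonneg_nonneg; simp)\<close>)+
    by (simp_all add: algebra_simps)
qed

definition no_top_fun3 :: "(nat \<Rightarrow> real) \<Rightarrow> real \<Rightarrow> real \<Rightarrow> real \<Rightarrow> nat set \<Rightarrow> real" where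
  "no_top_fun3 x p q r =
    set_fun3 (1 - (x 1 + x 2 + x 3) + p + q + r) (x 1 - p - q) (x 2 - p - r) (x 3 - q - r) p q r 0"

lemma lp_feasible_no_top_fun3_iff:
  "lp_feasible 3 x (no_top_fun3 x p q r) \<longleftrightarrow>
     0 \<le> p \<and> 0 \<le> q \<and> 0 \<le> r \<and> p + q \<le> x 1 \<and> p + r \<le> x 2 \<and> q + r \<le> x 3 \<and>
     x 1 + x 2 + x 3 \<le> 1 + p + q + r"
  unfolding lp_feasible_3_iff no_top_fun3_def set_fun3_simps by (auto simp: algebra_simps)

lemma lp_objective_no_top_fun3:
  "lp_objective 3 f (no_top_fun3 x p q r) =
    (1 - (x 1 + x 2 + x 3) + p + q + r) * f {} + (x 1 - p - q) * f {1} + (x 2 - p - r) * f {2} +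
    (x 3 - q - r) * f {3} + p * f {1,2} + q * f {1,3} + r * f {2,3}"
  unfolding lp_objective_3 no_top_fun3_def set_fun3_simps by simp

lemma lp_objective_le_no_top_fun3:
  assumes f: "class_F 3 f" and mid: "x 1 + x 2 + x 3 \<le> 2" and feasible: "lp_feasible 3 x \<theta>"
  obtains p q r where "lp_feasible 3 x (no_top_fun3 x p q r)"
    and "lp_objective 3 f \<theta> \<le> lp_objective 3 f (no_top_fun3 x p q r)"
proof -
  note F = class_F_3_inequalities[OF f]
  note \<theta> = lp_feasible_3D[OF feasible]
  define D where "D = \<theta> {1} + \<theta> {2} + \<theta> {3} + 2 * \<theta> {}"
  define l where "l = \<theta> {1,2,3} / D"
  text \<open>\<open>D - \<theta>([3]) = 2 - (x\<^sub>1 + x\<^sub>2 + x\<^sub>3)\<close>, so the mass of \<open>[3]\<close> is a fraction \<open>l\<close> of \<open>D\<close>.\<close>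
  have "\<theta> {1,2,3} \<le> D" using \<theta> mid unfolding D_def by linarith
  then have l: "0 \<le> l" "l \<le> 1" "\<theta> {1,2,3} = l * D"
    using \<theta> unfolding l_def D_def by (auto simp: divide_le_eq_1)
  define p where "p = \<theta> {1,2} + l * (\<theta> {1} + \<theta> {2} + \<theta> {})"
  define q where "q = \<theta> {1,3} + l * (\<theta> {1} + \<theta> {3} + \<theta> {})"
  define r where "r = \<theta> {2,3} + l * (\<theta> {2} + \<theta> {3} + \<theta> {})"
  have top: "\<theta> {1,2,3} = l * \<theta> {1} + l * \<theta> {2} + l * \<theta> {3} + 2 * (l * \<theta> {})"
    using l(3) unfolding D_def by (simp add: algebra_simps)
  have shifted:
    "1 - (x 1 + x 2 + x 3) + p + q + r = (1 - l) * \<theta> {}"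
    "x 1 - p - q = (1 - l) * \<theta> {1}" "x 2 - p - r = (1 - l) * \<theta> {2}" "x 3 - q - r = (1 - l) * \<theta> {3}"
    unfolding p_def q_def r_def using top \<theta>(9-12) by algebra+
  have "0 \<le> p" "0 \<le> q" "0 \<le> r" unfolding p_def q_def r_def using l \<theta> by simp_all
  moreover have "0 \<le> (1 - l) * \<theta> {}" "0 \<le> (1 - l) * \<theta> {1}" "0 \<le> (1 - l) * \<theta> {2}"
    "0 \<le> (1 - l) * \<theta> {3}"
    using l \<theta> by simp_all
  ultimately have "lp_feasible 3 x (no_top_fun3 x p q r)"
    unfolding lp_feasible_no_top_fun3_iff using shifted by (intro conjI; linarith)
  moreover have "lp_objective 3 f \<theta> \<le> lp_objective 3 f (no_top_fun3 x p q r)"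
  proof -
    have "lp_objective 3 f (no_top_fun3 x p q r) - lp_objective 3 f \<theta> =
        l * \<theta> {1} * (f {1,2} + f {1,3} - f {1} - f {1,2,3}) +
        l * \<theta> {2} * (f {1,2} + f {2,3} - f {2} - f {1,2,3}) +
        l * \<theta> {3} * (f {1,3} + f {2,3} - f {3} - f {1,2,3}) +
        l * \<theta> {} * (f {1,2} + f {1,3} + f {2,3} - f {} - 2 * f {1,2,3})"
      unfolding lp_objective_no_top_fun3 shifted
      unfolding lp_objective_3 p_def q_def r_def
      using top by algebra
    also have "\<dots> \<ge> 0"
      using F \<theta> l by (intro add_nonneg_nonneg mult_nonneg_nonneg) auto
    finally show ?thesis by simp
  qed
  ultimately show ?thesis using that by blast
qed

lemma exists_lp_optimal_no_top:
  assumes f: "class_F 3 f" and x: "\<forall>i\<in>{1..3}. 0 \<le> x i \<and> x i \<le> 1"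
    and mid: "x 1 + x 2 + x 3 \<le> 2"
  shows "\<exists>\<theta>. lp_optimal 3 f x \<theta> \<and> \<theta> {1,2,3} = 0"
proof -
  define \<Theta> where "\<Theta> t = no_top_fun3 x (fst t) (fst (snd t)) (snd (snd t))" for t :: "real \<times> real \<times> real"
  define P where "P = {t. lp_feasible 3 x (\<Theta> t)}"
  have "closed P"
    unfolding P_def \<Theta>_def lp_feasible_no_top_fun3_iff
    by (intro closed_Collect_conj closed_Collect_le continuous_intros)
  moreover have "P \<subseteq> cbox (0, 0, 0) (1, 1, 1)"
    using x unfolding P_def \<Theta>_def lp_feasible_no_top_fun3_iff
    by (force simp: cbox_Pair_iff)
  ultimately have "compact P"
    by (metis bounded_cbox bounded_subset compact_eq_bounded_closed)
  obtain p q r where "lp_feasible 3 x (no_top_fun3 x p q r)"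
    using lp_objective_le_no_top_fun3[OF f mid lp_feasible_independent_3[OF x]] by blast
  then have "(p, q, r) \<in> P" unfolding P_def \<Theta>_def by (simp only: mem_Collect_eq fst_conv snd_conv)
  then have "P \<noteq> {}" by blast
  moreover have "continuous_on P (\<lambda>t. lp_objective 3 f (\<Theta> t))"
    unfolding \<Theta>_def lp_objective_no_top_fun3 by (intro continuous_intros)
  ultimately obtain t0 where t0: "t0 \<in> P"
    "\<And>t. t \<in> P \<Longrightarrow> lp_objective 3 f (\<Theta> t) \<le> lp_objective 3 f (\<Theta> t0)"
    using continuous_attains_sup[OF \<open>compact P\<close>] by blast
  have "lp_objective 3 f \<theta> \<le> lp_objective 3 f (\<Theta> t0)" if feasible: "lp_feasible 3 x \<theta>" for \<theta>
  proof -
    obtain p q r where "lp_feasible 3 x (no_top_fun3 x p q r)"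
      and le: "lp_objective 3 f \<theta> \<le> lp_objective 3 f (no_top_fun3 x p q r)"
      using lp_objective_le_no_top_fun3[OF f mid feasible] .
    then have "(p, q, r) \<in> P" unfolding P_def \<Theta>_def by (simp only: mem_Collect_eq fst_conv snd_conv)
    from t0(2)[OF this] show ?thesis using le unfolding \<Theta>_def fst_conv snd_conv by linarith
  qed
  then have "lp_optimal 3 f x (\<Theta> t0)" using t0(1) unfolding lp_optimal_def P_def by blast
  moreover have "\<Theta> t0 {1,2,3} = 0" unfolding \<Theta>_def no_top_fun3_def set_fun3_simps ..
  ultimately show ?thesis by blast
qed

theorem mainTheorem7:
  fixes f :: "nat set \<Rightarrow> real" and x :: "nat \<Rightarrow> real"
  assumes hf: "class_F 3 f"
    and hx: "\<forall>i\<in>{1..3}. 0 \<le> x i \<and> x i \<le> 1"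
  shows "(\<exists>\<theta>. lp_optimal 3 f x \<theta> \<and> \<theta> {1,2,3} \<le> x 1 * x 2 * x 3)
    \<and> (x 1 + x 2 + x 3 \<le> 1 \<or> x 1 + x 2 + x 3 \<ge> 2 \<longrightarrow>
         (\<exists>\<theta>. lp_optimal 3 f x \<theta> \<and> neg_cylinder_dep 3 x \<theta>))"
proof
  show "\<exists>\<theta>. lp_optimal 3 f x \<theta> \<and> \<theta> {1,2,3} \<le> x 1 * x 2 * x 3"
  proof (cases "x 1 + x 2 + x 3 \<le> 2")
    case True
    have "0 \<le> x 1 * x 2 * x 3" using hx by simp
    then show ?thesis using exists_lp_optimal_no_top[OF hf hx True] by force
  next
    case False
    then show ?thesis using lp_optimal_pairs[OF hf hx] neg_cylinder_dep_3_iff by force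
  qed
  show "x 1 + x 2 + x 3 \<le> 1 \<or> x 1 + x 2 + x 3 \<ge> 2 \<longrightarrow>
      (\<exists>\<theta>. lp_optimal 3 f x \<theta> \<and> neg_cylinder_dep 3 x \<theta>)"
    using lp_optimal_singletons[OF hf hx] lp_optimal_pairs[OF hf hx] by blast
qed

end
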